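(* Let $n_1,n_2,n_3$ be integers with $3\le n_1,n_2\le n_3$. If $3\max(n_1,n_2)\le 2n_3\le n_1n_2$, then the direct product graph $K_{n_1+1}\times K_{n_2+1}\times K_{n_3+1}$ has metric dimension $2(n_3+1)-1=2n_3+1$.
   Context: $K_{m_1}\times K_{m_2}\times K_{m_3}$ denotes the direct product of complete graphs: vertices are triples $(x_1,x_2,x_3)$ with $1\le x_i\le m_i$, and two vertices are adjacent iff they differ in every coordinate. A set $W$ of vertices is resolving if for every two distinct vertices $x,y\notin W$ some $w\in W$ has $d(x,w)\ne d(y,w)$ ($d$ = graph distance). The metric dimension is the minimum size of a resolving set. *)

theory Defs
  imports Main
begin

type_synonym vtx = "nat \<times> nat \<times> nat"

definition kprod_verts :: "nat \<Rightarrow> nat \<Rightarrow> nat \<Rightarrow> vtx set" where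
  "kprod_verts m1 m2 m3 =
     {(a, b, c). 1 \<le> a \<and> a \<le> m1 \<and> 1 \<le> b \<and> b \<le> m2 \<and> 1 \<le> c \<and> c \<le> m3}"

fun kprod_adj :: "vtx \<Rightarrow> vtx \<Rightarrow> bool" where
  "kprod_adj (a, b, c) (a', b', c') = (a \<noteq> a' \<and> b \<noteq> b' \<and> c \<noteq> c')"

definition is_walk :: "'v set \<Rightarrow> ('v \<Rightarrow> 'v \<Rightarrow> bool) \<Rightarrow> 'v \<Rightarrow> 'v \<Rightarrow> nat \<Rightarrow> bool" where
  "is_walk V E x y k \<longleftrightarrow> (\<exists>p :: nat \<Rightarrow> 'v. p 0 = x \<and> p k = y \<and>
      (\<forall>i\<le>k. p i \<in> V) \<and> (\<forall>i<k. E (p i) (p (Suc i))))"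

definition graph_dist :: "'v set \<Rightarrow> ('v \<Rightarrow> 'v \<Rightarrow> bool) \<Rightarrow> 'v \<Rightarrow> 'v \<Rightarrow> nat" where
  "graph_dist V E x y = (LEAST k. is_walk V E x y k)"

definition resolving :: "'v set \<Rightarrow> ('v \<Rightarrow> 'v \<Rightarrow> bool) \<Rightarrow> 'v set \<Rightarrow> bool" where
  "resolving V E W \<longleftrightarrow> W \<subseteq> V \<and>
     (\<forall>x\<in>V - W. \<forall>y\<in>V - W. x \<noteq> y \<longrightarrow> (\<exists>w\<in>W. graph_dist V E x w \<noteq> graph_dist V E y w))"

definition metric_dim :: "'v set \<Rightarrow> ('v \<Rightarrow> 'v \<Rightarrow> bool) \<Rightarrow> nat" where
  "metric_dim V E = (LEAST k. \<exists>W. resolving V E W \<and> card W = k)"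

end

theory Submission
  imports Defs
begin

text \<open>Distinct vertices of the product are at distance 1 or 2, so W is resolving iff no two
  vertices outside W have the same neighbours in W. Lower bound: any two layers (values of the third
  coordinate) together contain three vertices of W, since otherwise a cell sharing a line with both
  projections gives two vertices with the same neighbours in W; summing over pairs of layers yields
  |W| \<ge> 2(n3 + 1) - 1. Upper bound: in each of the first n3 layers place two opposite corners of a
  rectangle in the n1 x n2 grid so that all remaining corners are distinct and every row and column
  holds three placed cells, and add the vertex (n1 + 1, n2 + 1, n3 + 1). Three cells in a row
  (column) separate vertices in different rows (columns), and the distinct corners separate layers.
  Such configurations with n3 layers exist whenever 3 max(n1, n2) \<le> 2 n3 \<le> n1 n2: they are
  grown from small explicit ones by adding strips of layers in two new rows or columns, and, at the
  lower end of the range, by a surgery that adds two rows, two columns and only three layers.\<close>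

section \<open>Distances in the product graph\<close>

lemma kprod_adj_iff:
  "kprod_adj x y \<longleftrightarrow> fst x \<noteq> fst y \<and> fst (snd x) \<noteq> fst (snd y) \<and> snd (snd x) \<noteq> snd (snd y)"
  by (cases x; cases y) auto

lemma kprod_verts_iff:
  "x \<in> kprod_verts m1 m2 m3 \<longleftrightarrow>
     1 \<le> fst x \<and> fst x \<le> m1 \<and> 1 \<le> fst (snd x) \<and> fst (snd x) \<le> m2 \<and> 1 \<le> snd (snd x) \<and> snd (snd x) \<le> m3"
  by (cases x) (auto simp: kprod_verts_def)

lemma finite_kprod_verts: "finite (kprod_verts m1 m2 m3)"
proof (rule finite_subset)
  show "kprod_verts m1 m2 m3 \<subseteq> {1..m1} \<times> {1..m2} \<times> {1..m3}"
    by (auto simp: kprod_verts_def)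
qed simp

lemma is_walk_0_iff: "is_walk V E x y 0 \<longleftrightarrow> x = y \<and> x \<in> V"
  unfolding is_walk_def by auto

lemma is_walk_1_iff: "is_walk V E x y 1 \<longleftrightarrow> x \<in> V \<and> y \<in> V \<and> E x y"
proof
  assume "is_walk V E x y 1"
  then obtain p where "p 0 = x" "p 1 = y" "\<forall>i\<le>1. p i \<in> V" "\<forall>i<1. E (p i) (p (Suc i))"
    unfolding is_walk_def by blast
  then show "x \<in> V \<and> y \<in> V \<and> E x y" by force
next
  assume "x \<in> V \<and> y \<in> V \<and> E x y"
  then show "is_walk V E x y 1"
    unfolding is_walk_def by (intro exI[of _ "\<lambda>i. if i = 0 then x else y"]) (auto simp: le_Suc_eq)
qed

lemma is_walk_2I:
  assumes "x \<in> V" "y \<in> V" "z \<in> V" "E x z" "E z y"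
  shows "is_walk V E x y 2"
  unfolding is_walk_def using assms
  by (intro exI[of _ "\<lambda>i. if i = 0 then x else if i = 1 then z else y"])
     (auto simp: numeral_2_eq_2 le_Suc_eq less_Suc_eq)

lemma graph_dist_eq_1:
  assumes "x \<in> V" "y \<in> V" "x \<noteq> y" "E x y"
  shows "graph_dist V E x y = 1"
  unfolding graph_dist_def
proof (rule Least_equality)
  show "is_walk V E x y 1" using assms by (intro is_walk_1_iff[THEN iffD2]) simp
next
  fix k assume "is_walk V E x y k"
  then show "1 \<le> k" using assms(3) by (cases k) (auto simp: is_walk_0_iff)
qed

lemma graph_dist_eq_2:
  assumes "x \<in> V" "y \<in> V" "z \<in> V" "x \<noteq> y" "\<not> E x y" "E x z" "E z y"
  shows "graph_dist V E x y = 2"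
  unfolding graph_dist_def
proof (rule Least_equality)
  show "is_walk V E x y 2" using assms by (intro is_walk_2I)
next
  fix k assume walk: "is_walk V E x y k"
  show "2 \<le> k"
  proof (rule ccontr)
    assume "\<not> 2 \<le> k"
    then have "k = 0 \<or> k = 1" by arith
    then show False using walk assms(4,5) by (auto simp only: is_walk_0_iff is_walk_1_iff)
  qed
qed

lemma metric_dim_eqI:
  assumes "resolving V E W" "card W = k" "\<And>W'. resolving V E W' \<Longrightarrow> k \<le> card W'"
  shows "metric_dim V E = k"
  unfolding metric_dim_def using assms by (intro Least_equality) auto

lemma ex_in_range_avoiding_two:
  assumes "(3::nat) \<le> m"
  obtains z where "1 \<le> z" "z \<le> m" "z \<noteq> a" "z \<noteq> b"
proof -
  have "{1, 2, 3::nat} - {a, b} \<noteq> {}" by auto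
  then obtain z where "z \<in> {1, 2, 3}" "z \<notin> {a, b}" by blast
  then show thesis using assms by (intro that[of z]) auto
qed

lemma kprod_common_neighbour:
  assumes "3 \<le> m1" "3 \<le> m2" "3 \<le> m3"
    and "x \<in> kprod_verts m1 m2 m3" "y \<in> kprod_verts m1 m2 m3"
  obtains z where "z \<in> kprod_verts m1 m2 m3" "kprod_adj x z" "kprod_adj z y"
proof -
  obtain z1 where "1 \<le> z1" "z1 \<le> m1" "z1 \<noteq> fst x" "z1 \<noteq> fst y"
    using ex_in_range_avoiding_two assms(1) by blast
  moreover obtain z2 where "1 \<le> z2" "z2 \<le> m2" "z2 \<noteq> fst (snd x)" "z2 \<noteq> fst (snd y)"
    using ex_in_range_avoiding_two assms(2) by blast
  moreover obtain z3 where "1 \<le> z3" "z3 \<le> m3" "z3 \<noteq> snd (snd x)" "z3 \<noteq> snd (snd y)"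
    using ex_in_range_avoiding_two assms(3) by blast
  ultimately show thesis
    by (intro that[of "(z1, z2, z3)"]) (auto simp: kprod_verts_def kprod_adj_iff)
qed

lemma kprod_graph_dist:
  assumes "3 \<le> m1" "3 \<le> m2" "3 \<le> m3"
    and "x \<in> kprod_verts m1 m2 m3" "y \<in> kprod_verts m1 m2 m3" "x \<noteq> y"
  shows "graph_dist (kprod_verts m1 m2 m3) kprod_adj x y = (if kprod_adj x y then 1 else 2)"
proof -
  obtain z where "z \<in> kprod_verts m1 m2 m3" "kprod_adj x z" "kprod_adj z y"
    using kprod_common_neighbour assms(1-5) by blast
  then show ?thesis
    using assms(4-6) graph_dist_eq_1[of x _ y] graph_dist_eq_2[of x _ y z] by (cases "kprod_adj x y") simp_all
qed

definition same_adjacency :: "vtx set \<Rightarrow> vtx \<Rightarrow> vtx \<Rightarrow> bool" where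
  "same_adjacency W x y \<longleftrightarrow> (\<forall>w\<in>W. kprod_adj x w = kprod_adj y w)"

lemma same_adjacency_sym: "same_adjacency W x y \<Longrightarrow> same_adjacency W y x"
  unfolding same_adjacency_def by simp

lemma kprod_resolving_iff:
  assumes "3 \<le> m1" "3 \<le> m2" "3 \<le> m3"
  shows "resolving (kprod_verts m1 m2 m3) kprod_adj W \<longleftrightarrow> W \<subseteq> kprod_verts m1 m2 m3 \<and>
     (\<forall>x\<in>kprod_verts m1 m2 m3 - W. \<forall>y\<in>kprod_verts m1 m2 m3 - W. x \<noteq> y \<longrightarrow> \<not> same_adjacency W x y)"
proof -
  let ?V = "kprod_verts m1 m2 m3"
  have "graph_dist ?V kprod_adj x w = graph_dist ?V kprod_adj y w \<longleftrightarrow> kprod_adj x w = kprod_adj y w"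
    if "W \<subseteq> ?V" "x \<in> ?V - W" "y \<in> ?V - W" "w \<in> W" for x y w
  proof -
    have "w \<in> ?V" "x \<noteq> w" "y \<noteq> w" using that by auto
    then show ?thesis using that kprod_graph_dist[OF assms, of x w] kprod_graph_dist[OF assms, of y w] by simp
  qed
  then have "(\<exists>w\<in>W. graph_dist ?V kprod_adj x w \<noteq> graph_dist ?V kprod_adj y w) \<longleftrightarrow> \<not> same_adjacency W x y"
    if "W \<subseteq> ?V" "x \<in> ?V - W" "y \<in> ?V - W" for x y
    using that unfolding same_adjacency_def by blast
  then show ?thesis
    unfolding resolving_def by blast
qed

section \<open>The lower bound\<close>

definition layer :: "vtx set \<Rightarrow> nat \<Rightarrow> vtx set" where
  "layer W c = {w \<in> W. snd (snd w) = c}"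

lemma card_le_2_imp_subset_doubleton:
  assumes "finite U" "card U \<le> 2" "U \<subseteq> S" "S \<noteq> {}"
  obtains u v where "u \<in> S" "v \<in> S" "U \<subseteq> {u, v}"
proof -
  consider "card U = 0" | "card U = 1" | "card U = 2" using assms(2) by linarith
  then show thesis
  proof cases
    case 1
    then show thesis using assms(1,4) that by auto
  next
    case 2
    then obtain a where "U = {a}" by (rule card_1_singletonE)
    then show thesis using assms(3) that by blast
  next
    case 3
    then obtain a b where "U = {a, b}" by (meson card_2_iff)
    then show thesis using assms(3) that by blast
  qed
qed

lemma ex_cell_collinear_with_two:
  fixes p p' q q' :: nat
  assumes "3 \<le> m1" "3 \<le> m2" "1 \<le> p" "p \<le> m1" "1 \<le> p'" "p' \<le> m1" "1 \<le> q" "q \<le> m2" "1 \<le> q'" "q' \<le> m2"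
  obtains a b where "1 \<le> a" "a \<le> m1" "1 \<le> b" "b \<le> m2" "a = p \<or> b = q" "a = p' \<or> b = q'"
    "(a, b) \<noteq> (p, q)" "(a, b) \<noteq> (p', q')"
proof (cases "p = p'")
  case True
  obtain b where "1 \<le> b" "b \<le> m2" "b \<noteq> q" "b \<noteq> q'" using ex_in_range_avoiding_two assms(2) by blast
  then show thesis using True assms that[of p b] by auto
next
  case False
  show thesis
  proof (cases "q = q'")
    case True
    obtain a where "1 \<le> a" "a \<le> m1" "a \<noteq> p" "a \<noteq> p'" using ex_in_range_avoiding_two assms(1) by blast
    then show thesis using True assms that[of a q] by auto
  qed (use False assms that[of p q'] in auto)
qed

lemma same_adjacency_across_layers:
  assumes "\<And>w. w \<in> W \<Longrightarrow> snd (snd w) = c \<or> snd (snd w) = c' \<Longrightarrow> fst w = a \<or> fst (snd w) = b"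
  shows "same_adjacency W (a, b, c) (a, b, c')"
  unfolding same_adjacency_def kprod_adj_iff using assms by fastforce

text \<open>If two layers carried at most two vertices of W, some cell collinear with their
  projections but equal to neither would give two vertices with the same adjacency to W.\<close>

lemma resolving_two_layers:
  assumes m: "3 \<le> m1" "3 \<le> m2" "3 \<le> m3"
    and res: "resolving (kprod_verts m1 m2 m3) kprod_adj W"
    and c: "1 \<le> c" "c \<le> m3" "1 \<le> c'" "c' \<le> m3" "c \<noteq> c'"
  shows "3 \<le> card (layer W c) + card (layer W c')"
proof (rule ccontr)
  let ?V = "kprod_verts m1 m2 m3" and ?U = "layer W c \<union> layer W c'"
  assume small: "\<not> 3 \<le> card (layer W c) + card (layer W c')"
  have W: "W \<subseteq> ?V" and sep: "\<And>x y. x \<in> ?V - W \<Longrightarrow> y \<in> ?V - W \<Longrightarrow> x \<noteq> y \<Longrightarrow> \<not> same_adjacency W x y"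
    using res kprod_resolving_iff[OF m] by blast+
  have "finite W" using W finite_kprod_verts by (rule finite_subset)
  then have "finite ?U" by (simp add: layer_def)
  moreover have "card ?U \<le> 2" using small card_Un_le[of "layer W c" "layer W c'"] by linarith
  moreover have "?U \<subseteq> ?V" using W by (auto simp: layer_def)
  moreover have "(1, 1, 1) \<in> ?V" using m by (simp add: kprod_verts_def)
  ultimately obtain u v where uv: "u \<in> ?V" "v \<in> ?V" "?U \<subseteq> {u, v}"
    using card_le_2_imp_subset_doubleton[of ?U ?V] by blast
  obtain a b where ab: "1 \<le> a" "a \<le> m1" "1 \<le> b" "b \<le> m2"
    "a = fst u \<or> b = fst (snd u)" "a = fst v \<or> b = fst (snd v)"
    "(a, b) \<noteq> (fst u, fst (snd u))" "(a, b) \<noteq> (fst v, fst (snd v))"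
    using ex_cell_collinear_with_two[OF m(1,2), of "fst u" "fst v" "fst (snd u)" "fst (snd v)"] uv(1,2)
    by (auto simp: kprod_verts_iff)
  have "(a, b, d) \<in> ?V - W" if "d = c \<or> d = c'" for d
  proof
    show "(a, b, d) \<in> ?V" using ab c that by (auto simp: kprod_verts_def)
    show "(a, b, d) \<notin> W"
    proof
      assume "(a, b, d) \<in> W"
      then have "(a, b, d) \<in> {u, v}" using uv(3) that by (auto simp: layer_def)
      then show False using ab(7,8) by auto
    qed
  qed
  moreover have "same_adjacency W (a, b, c) (a, b, c')"
  proof (rule same_adjacency_across_layers)
    fix w assume "w \<in> W" "snd (snd w) = c \<or> snd (snd w) = c'"
    then show "fst w = a \<or> fst (snd w) = b" using uv(3) ab(5,6) by (auto simp: layer_def)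
  qed
  ultimately show False using sep[of "(a, b, c)" "(a, b, c')"] c(5) by blast
qed

lemma sum_ge_of_pairwise_sum_ge_3:
  fixes f :: "'a \<Rightarrow> nat"
  assumes I: "finite I" "2 \<le> card I"
    and pair: "\<And>i j. i \<in> I \<Longrightarrow> j \<in> I \<Longrightarrow> i \<noteq> j \<Longrightarrow> 3 \<le> f i + f j"
  shows "2 * card I - 1 \<le> sum f I"
proof (cases "\<exists>i\<in>I. f i \<le> 1")
  case True
  then obtain i where i: "i \<in> I" "f i \<le> 1" by blast
  have "(card I - 1) * (3 - f i) = (\<Sum>_\<in>I - {i}. 3 - f i)" using i I by simp
  also have "\<dots> \<le> sum f (I - {i})" by (rule sum_mono) (use pair i in force)
  finally have "f i + (card I - 1) * (3 - f i) \<le> sum f I" using i I by (simp add: sum.remove)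
  moreover have "2 * card I - 1 \<le> f i + (card I - 1) * (3 - f i)"
    using i(2) I(2) by (cases "f i") (simp_all add: algebra_simps)
  ultimately show ?thesis by linarith
next
  case False
  then have "(\<Sum>_\<in>I. 2) \<le> sum f I" by (intro sum_mono) force
  then show ?thesis by simp
qed

lemma kprod_resolving_card_ge:
  assumes m: "3 \<le> m1" "3 \<le> m2" "3 \<le> m3"
    and res: "resolving (kprod_verts m1 m2 m3) kprod_adj W"
  shows "2 * m3 - 1 \<le> card W"
proof -
  have W: "W \<subseteq> kprod_verts m1 m2 m3" using res unfolding resolving_def by blast
  then have "finite W" using finite_kprod_verts by (rule finite_subset)
  moreover have "(\<lambda>w. snd (snd w)) ` W \<subseteq> {1..m3}" using W by (auto simp: kprod_verts_iff)
  ultimately have "card W = (\<Sum>c\<in>{1..m3}. card (layer W c))"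
    using sum.group[of W "{1..m3}" "\<lambda>w. snd (snd w)" "\<lambda>_. 1::nat"] by (simp add: layer_def)
  moreover have "2 * card {1..m3} - 1 \<le> (\<Sum>c\<in>{1..m3}. card (layer W c))"
    by (rule sum_ge_of_pairwise_sum_ge_3) (use m resolving_two_layers[OF m res] in auto)
  ultimately show ?thesis by simp
qed

section \<open>Configurations of rectangles\<close>

text \<open>The resolving sets of the upper bound come from configurations of K layers: layer i
  carries the cells Us ! i and Vs ! i of the 0-based n1 x n2 grid, opposite corners of a rectangle,
  and the other two corners of all these rectangles are pairwise distinct.\<close>

type_synonym cell = "nat \<times> nat"

definition corner_a :: "cell \<Rightarrow> cell \<Rightarrow> cell" where
  "corner_a u v = (fst u, snd v)"

definition corner_b :: "cell \<Rightarrow> cell \<Rightarrow> cell" where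
  "corner_b u v = (fst v, snd u)"

definition opposite_cells :: "nat \<Rightarrow> nat \<Rightarrow> cell \<Rightarrow> cell \<Rightarrow> bool" where
  "opposite_cells n1 n2 u v \<longleftrightarrow>
     fst u < n1 \<and> snd u < n2 \<and> fst v < n1 \<and> snd v < n2 \<and> fst u \<noteq> fst v \<and> snd u \<noteq> snd v"

definition rect_config :: "nat \<Rightarrow> nat \<Rightarrow> cell list \<Rightarrow> cell list \<Rightarrow> bool" where
  "rect_config n1 n2 Us Vs \<longleftrightarrow> length Us = length Vs \<and>
     (\<forall>p\<in>set (zip Us Vs). opposite_cells n1 n2 (fst p) (snd p)) \<and>
     distinct (Us @ Vs) \<and> distinct (map2 corner_a Us Vs @ map2 corner_b Us Vs)"

definition rows_hit3 :: "nat \<Rightarrow> cell list \<Rightarrow> bool" where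
  "rows_hit3 n1 L \<longleftrightarrow> (\<forall>r<n1. 3 \<le> length (filter (\<lambda>e. fst e = r) L))"

definition cols_hit3 :: "nat \<Rightarrow> cell list \<Rightarrow> bool" where
  "cols_hit3 n2 L \<longleftrightarrow> (\<forall>c<n2. 3 \<le> length (filter (\<lambda>e. snd e = c) L))"

definition good_config :: "nat \<Rightarrow> nat \<Rightarrow> cell list \<Rightarrow> cell list \<Rightarrow> bool" where
  "good_config n1 n2 Us Vs \<longleftrightarrow> rect_config n1 n2 Us Vs \<and> rows_hit3 n1 (Us @ Vs) \<and> cols_hit3 n2 (Us @ Vs)"

definition placed_cells :: "cell list \<Rightarrow> cell list \<Rightarrow> (cell \<times> nat) set" where
  "placed_cells Us Vs = (\<lambda>i. (Us ! i, i)) ` {..<length Us} \<union> (\<lambda>i. (Vs ! i, i)) ` {..<length Us}"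

definition config_vertices :: "nat \<Rightarrow> nat \<Rightarrow> cell list \<Rightarrow> cell list \<Rightarrow> vtx set" where
  "config_vertices n1 n2 Us Vs = insert (n1 + 1, n2 + 1, length Us + 1)
     ((\<lambda>(e, i). (fst e + 1, snd e + 1, i + 1)) ` placed_cells Us Vs)"

lemma rect_config_opposite:
  "rect_config n1 n2 Us Vs \<Longrightarrow> i < length Us \<Longrightarrow> opposite_cells n1 n2 (Us ! i) (Vs ! i)"
  unfolding rect_config_def by (metis fst_conv in_set_zip snd_conv)

lemma rect_config_corner_inj:
  assumes "rect_config n1 n2 Us Vs" "i < length Us" "j < length Us"
    and "p = corner_a (Us ! i) (Vs ! i) \<or> p = corner_b (Us ! i) (Vs ! i)"
    and "p = corner_a (Us ! j) (Vs ! j) \<or> p = corner_b (Us ! j) (Vs ! j)"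
  shows "i = j"
proof -
  have l: "length Vs = length Us" and da: "distinct (map2 corner_a Us Vs)"
    and db: "distinct (map2 corner_b Us Vs)"
    and dab: "set (map2 corner_a Us Vs) \<inter> set (map2 corner_b Us Vs) = {}"
    using assms(1) unfolding rect_config_def by auto
  have nth: "map2 f Us Vs ! k = f (Us ! k) (Vs ! k)" "map2 f Us Vs ! k \<in> set (map2 f Us Vs)"
    if "k < length Us" for f :: "cell \<Rightarrow> cell \<Rightarrow> cell" and k
    using that l nth_mem[of k "map2 f Us Vs"] by auto
  from assms(4,5) show ?thesis
  proof (elim disjE)
    assume "p = corner_a (Us ! i) (Vs ! i)" "p = corner_a (Us ! j) (Vs ! j)"
    then show ?thesis using nth_eq_iff_index_eq[OF da, of i j] nth(1) assms(2,3) l by simp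
  next
    assume "p = corner_b (Us ! i) (Vs ! i)" "p = corner_b (Us ! j) (Vs ! j)"
    then show ?thesis using nth_eq_iff_index_eq[OF db, of i j] nth(1) assms(2,3) l by simp
  next
    assume "p = corner_a (Us ! i) (Vs ! i)" "p = corner_b (Us ! j) (Vs ! j)"
    then have "p \<in> set (map2 corner_a Us Vs) \<inter> set (map2 corner_b Us Vs)"
      using nth[OF assms(2), of corner_a] nth[OF assms(3), of corner_b] by simp
    then show ?thesis using dab by blast
  next
    assume "p = corner_b (Us ! i) (Vs ! i)" "p = corner_a (Us ! j) (Vs ! j)"
    then have "p \<in> set (map2 corner_a Us Vs) \<inter> set (map2 corner_b Us Vs)"
      using nth[OF assms(3), of corner_a] nth[OF assms(2), of corner_b] by simp
    then show ?thesis using dab by blast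
  qed
qed

lemma placed_cells_iff:
  "(e, i) \<in> placed_cells Us Vs \<longleftrightarrow> i < length Us \<and> (e = Us ! i \<or> e = Vs ! i)"
  by (auto simp: placed_cells_def)

lemma rect_config_same_layer:
  assumes "rect_config n1 n2 Us Vs" "(e, i) \<in> placed_cells Us Vs" "(e', i) \<in> placed_cells Us Vs" "e \<noteq> e'"
  shows "fst e \<noteq> fst e'" "snd e \<noteq> snd e'"
  using assms rect_config_opposite[OF assms(1), of i] by (auto simp: placed_cells_iff opposite_cells_def)

lemma rect_config_placed_bounds:
  assumes "rect_config n1 n2 Us Vs" "(e, i) \<in> placed_cells Us Vs"
  shows "fst e < n1" "snd e < n2"
  using assms(2) rect_config_opposite[OF assms(1), of i] by (auto simp: placed_cells_iff opposite_cells_def)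

lemma placed_cells_of_set:
  assumes "rect_config n1 n2 Us Vs" "e \<in> set (Us @ Vs)"
  obtains i where "(e, i) \<in> placed_cells Us Vs"
  using assms by (auto simp: rect_config_def placed_cells_iff in_set_conv_nth)

lemma card_placed_cells:
  assumes g: "rect_config n1 n2 Us Vs"
  shows "card (placed_cells Us Vs) = 2 * length Us"
proof -
  let ?K = "length Us"
  have "Us ! i \<noteq> Vs ! i" if "i < ?K" for i
    using rect_config_opposite[OF g that] by (auto simp: opposite_cells_def)
  then have "(\<lambda>i. (Us ! i, i)) ` {..<?K} \<inter> (\<lambda>i. (Vs ! i, i)) ` {..<?K} = {}"
    by fastforce
  moreover have "inj_on (\<lambda>i. (Us ! i, i)) {..<?K}" "inj_on (\<lambda>i. (Vs ! i, i)) {..<?K}"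
    by (auto intro: inj_onI)
  ultimately show ?thesis
    unfolding placed_cells_def by (simp add: card_Un_disjoint card_image)
qed

lemma config_vertices_subset:
  assumes "rect_config n1 n2 Us Vs"
  shows "config_vertices n1 n2 Us Vs \<subseteq> kprod_verts (n1 + 1) (n2 + 1) (length Us + 1)"
  using rect_config_placed_bounds[OF assms]
  by (fastforce simp: config_vertices_def kprod_verts_def placed_cells_iff)

lemma card_config_vertices:
  assumes "rect_config n1 n2 Us Vs"
  shows "card (config_vertices n1 n2 Us Vs) = 2 * length Us + 1"
proof -
  have "inj_on (\<lambda>(e, i). (fst e + 1, snd e + 1, i + 1)) (placed_cells Us Vs)"
    by (auto intro!: inj_onI simp: prod_eq_iff)
  moreover have "(n1 + 1, n2 + 1, length Us + 1) \<notin> (\<lambda>(e, i). (fst e + 1, snd e + 1, i + 1)) ` placed_cells Us Vs"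
    by (auto simp: placed_cells_iff)
  moreover have "finite (placed_cells Us Vs)" by (simp add: placed_cells_def)
  ultimately show ?thesis
    unfolding config_vertices_def using card_placed_cells[OF assms] by (simp add: card_image)
qed

lemma config_vertex_of_placed:
  "(e, i) \<in> placed_cells Us Vs \<Longrightarrow> (fst e + 1, snd e + 1, i + 1) \<in> config_vertices n1 n2 Us Vs"
  unfolding config_vertices_def by (rule insertI2, rule image_eqI[of _ _ "(e, i)"]) simp_all

lemma three_le_length_filterE:
  assumes "distinct L" "3 \<le> length (filter P L)"
  obtains x y z where "{x, y, z} \<subseteq> set L" "P x" "P y" "P z" "distinct [x, y, z]"
proof -
  obtain x y z R where F: "filter P L = x # y # z # R"
    using assms(2) by (auto simp: numeral_3_eq_3 Suc_le_length_iff)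
  moreover have "distinct (filter P L)" using assms(1) by simp
  ultimately show thesis using that[of x y z] set_filter[of P L] by (simp add: F) blast
qed

lemma three_le_length_filterI:
  assumes "{x, y, z} \<subseteq> set L" "P x" "P y" "P z" "distinct [x, y, z]"
  shows "3 \<le> length (filter P L)"
proof -
  have "card {x, y, z} \<le> card (set (filter P L))" using assms by (intro card_mono) auto
  also have "\<dots> \<le> length (filter P L)" by (rule card_length)
  finally show ?thesis using assms(5) by simp
qed

lemma placed_cells_line_triple:
  assumes g: "rect_config n1 n2 Us Vs" and line: "3 \<le> length (filter (\<lambda>e. f e = k) (Us @ Vs))"
    and f: "f = fst \<or> f = snd"
  obtains e0 e1 e2 i0 i1 i2 where "{(e0, i0), (e1, i1), (e2, i2)} \<subseteq> placed_cells Us Vs"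
    "f e0 = k" "f e1 = k" "f e2 = k" "distinct [e0, e1, e2]" "distinct [i0, i1, i2]"
proof -
  have "distinct (Us @ Vs)" using g by (simp add: rect_config_def)
  then obtain e0 e1 e2 where e: "{e0, e1, e2} \<subseteq> set (Us @ Vs)" "f e0 = k" "f e1 = k" "f e2 = k"
    "distinct [e0, e1, e2]"
    using line by (rule three_le_length_filterE)
  then obtain i0 i1 i2 where i: "(e0, i0) \<in> placed_cells Us Vs" "(e1, i1) \<in> placed_cells Us Vs"
    "(e2, i2) \<in> placed_cells Us Vs"
    using placed_cells_of_set[OF g] by (metis insert_subset)
  have "i \<noteq> j" if "(e, i) \<in> placed_cells Us Vs" "(e', j) \<in> placed_cells Us Vs" "e \<noteq> e'" "f e = f e'"
    for e e' i j
    using rect_config_same_layer[OF g] that f by metis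
  then show thesis using that[OF _ e(2-5)] i e(2-5) by auto
qed

text \<open>Here y is adjacent to one of the three vertices, while x is adjacent to none.\<close>

lemma not_same_adjacency_of_triple:
  assumes adj: "\<And>z w. kprod_adj z w \<longleftrightarrow> p z \<noteq> p w \<and> q z \<noteq> q w \<and> r z \<noteq> r w"
    and W: "{w0, w1, w2} \<subseteq> W" and px: "p w0 = p x" "p w1 = p x" "p w2 = p x" and py: "p y \<noteq> p x"
    and qr: "distinct [q w0, q w1, q w2]" "distinct [r w0, r w1, r w2]"
  shows "\<not> same_adjacency W x y"
proof
  assume same: "same_adjacency W x y"
  have "q y = q w \<or> r y = r w" if w: "w \<in> {w0, w1, w2}" for w
  proof -
    have "p w = p x" using w px by auto
    moreover have "kprod_adj x w = kprod_adj y w"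
      using same W w unfolding same_adjacency_def by blast
    ultimately have "\<not> kprod_adj y w" by (simp add: adj)
    then show ?thesis using py \<open>p w = p x\<close> by (simp add: adj)
  qed
  then have "q y = q w0 \<or> r y = r w0" "q y = q w1 \<or> r y = r w1" "q y = q w2 \<or> r y = r w2"
    by simp_all
  then show False using qr by auto
qed

lemma good_config_row_separates:
  assumes g: "good_config n1 n2 Us Vs" and x: "1 \<le> fst x" "fst x \<le> n1" and y: "fst y \<noteq> fst x"
  shows "\<not> same_adjacency (config_vertices n1 n2 Us Vs) x y"
proof -
  have r: "rect_config n1 n2 Us Vs" and line: "3 \<le> length (filter (\<lambda>e. fst e = fst x - 1) (Us @ Vs))"
    using g x by (auto simp: good_config_def rows_hit3_def)
  obtain e0 e1 e2 i0 i1 i2 where e: "{(e0, i0), (e1, i1), (e2, i2)} \<subseteq> placed_cells Us Vs"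
    "fst e0 = fst x - 1" "fst e1 = fst x - 1" "fst e2 = fst x - 1" "distinct [e0, e1, e2]" "distinct [i0, i1, i2]"
    by (rule placed_cells_line_triple[OF r line disjI1[OF refl]])
  let ?w = "\<lambda>(e, i). (fst e + 1, snd e + 1, i + 1)"
  have W: "{?w (e0, i0), ?w (e1, i1), ?w (e2, i2)} \<subseteq> config_vertices n1 n2 Us Vs"
    using e(1) config_vertex_of_placed by simp
  have "distinct [snd e0, snd e1, snd e2]" using e(2-5) by (auto simp: prod_eq_iff)
  moreover have "fst e0 + 1 = fst x" "fst e1 + 1 = fst x" "fst e2 + 1 = fst x"
    using e(2-4) x by linarith+
  ultimately show ?thesis
    using e(6) y
    by (intro not_same_adjacency_of_triple[where p = "fst" and q = "\<lambda>w. fst (snd w)" and r = "\<lambda>w. snd (snd w)", OF kprod_adj_iff W])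
      simp_all
qed

lemma good_config_col_separates:
  assumes g: "good_config n1 n2 Us Vs" and x: "1 \<le> fst (snd x)" "fst (snd x) \<le> n2"
    and y: "fst (snd y) \<noteq> fst (snd x)"
  shows "\<not> same_adjacency (config_vertices n1 n2 Us Vs) x y"
proof -
  have r: "rect_config n1 n2 Us Vs" and line: "3 \<le> length (filter (\<lambda>e. snd e = fst (snd x) - 1) (Us @ Vs))"
    using g x by (auto simp: good_config_def cols_hit3_def)
  obtain e0 e1 e2 i0 i1 i2 where e: "{(e0, i0), (e1, i1), (e2, i2)} \<subseteq> placed_cells Us Vs"
    "snd e0 = fst (snd x) - 1" "snd e1 = fst (snd x) - 1" "snd e2 = fst (snd x) - 1"
    "distinct [e0, e1, e2]" "distinct [i0, i1, i2]"
    by (rule placed_cells_line_triple[OF r line disjI2[OF refl]])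
  let ?w = "\<lambda>(e, i). (fst e + 1, snd e + 1, i + 1)"
  have W: "{?w (e0, i0), ?w (e1, i1), ?w (e2, i2)} \<subseteq> config_vertices n1 n2 Us Vs"
    using e(1) config_vertex_of_placed by simp
  have adj: "kprod_adj z w \<longleftrightarrow> fst (snd z) \<noteq> fst (snd w) \<and> fst z \<noteq> fst w \<and> snd (snd z) \<noteq> snd (snd w)" for z w
    by (auto simp: kprod_adj_iff)
  have "distinct [fst e0, fst e1, fst e2]" using e(2-5) by (auto simp: prod_eq_iff)
  moreover have "snd e0 + 1 = fst (snd x)" "snd e1 + 1 = fst (snd x)" "snd e2 + 1 = fst (snd x)"
    using e(2-4) x by linarith+
  ultimately show ?thesis
    using e(6) y
    by (intro not_same_adjacency_of_triple[where p = "\<lambda>w. fst (snd w)" and q = fst and r = "\<lambda>w. snd (snd w)", OF adj W])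
      simp_all
qed

text \<open>Both vertices of W in layer c must share a line with the cell (a, b) without being it,
  so (a, b) is one of the two other corners of the rectangle of that layer.\<close>

lemma config_same_adjacency_corner:
  assumes g: "rect_config n1 n2 Us Vs" and x: "(a, b, c) \<notin> config_vertices n1 n2 Us Vs"
    and c: "1 \<le> c" "c \<le> length Us" "c' \<noteq> c" and ab: "1 \<le> a" "1 \<le> b"
    and same: "same_adjacency (config_vertices n1 n2 Us Vs) (a, b, c) (a, b, c')"
  shows "(a - 1, b - 1) = corner_a (Us ! (c - 1)) (Vs ! (c - 1)) \<or>
    (a - 1, b - 1) = corner_b (Us ! (c - 1)) (Vs ! (c - 1))"
proof -
  let ?u = "Us ! (c - 1)" and ?v = "Vs ! (c - 1)"
  have in_W: "(fst ?u + 1, snd ?u + 1, c) \<in> config_vertices n1 n2 Us Vs"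
    "(fst ?v + 1, snd ?v + 1, c) \<in> config_vertices n1 n2 Us Vs"
    using c unfolding config_vertices_def by (force intro!: image_eqI[of _ _ "(_, c - 1)"] simp: placed_cells_iff)+
  then have "a = fst ?u + 1 \<or> b = snd ?u + 1" "a = fst ?v + 1 \<or> b = snd ?v + 1"
    using same c(3) unfolding same_adjacency_def by (fastforce simp: kprod_adj_iff)+
  moreover have "\<not> (a = fst ?u + 1 \<and> b = snd ?u + 1)" "\<not> (a = fst ?v + 1 \<and> b = snd ?v + 1)"
    using x in_W by auto
  moreover have "fst ?u \<noteq> fst ?v" "snd ?u \<noteq> snd ?v"
    using rect_config_opposite[OF g, of "c - 1"] c by (auto simp: opposite_cells_def)
  ultimately show ?thesis using ab unfolding corner_a_def corner_b_def by auto
qed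

lemma rect_config_corner_bounds:
  assumes "rect_config n1 n2 Us Vs" "i < length Us"
    and "p = corner_a (Us ! i) (Vs ! i) \<or> p = corner_b (Us ! i) (Vs ! i)"
  shows "fst p < n1" "snd p < n2"
  using rect_config_opposite[OF assms(1,2)] assms(3) by (auto simp: opposite_cells_def corner_a_def corner_b_def)

lemma config_same_adjacency_cell_bounds:
  assumes g: "rect_config n1 n2 Us Vs" and x: "(a, b, c) \<notin> config_vertices n1 n2 Us Vs"
    and c: "1 \<le> c" "c \<le> length Us" "c' \<noteq> c" and ab: "1 \<le> a" "1 \<le> b"
    and same: "same_adjacency (config_vertices n1 n2 Us Vs) (a, b, c) (a, b, c')"
  shows "a \<le> n1" "b \<le> n2"
proof -
  have "c - 1 < length Us" using c by simp
  from rect_config_corner_bounds[OF g this config_same_adjacency_corner[OF assms]]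
  show "a \<le> n1" "b \<le> n2" by auto
qed

lemma config_same_adjacency_top:
  assumes "same_adjacency (config_vertices n1 n2 Us Vs) (a, b, length Us + 1) (a, b, c')"
    and "c' \<noteq> length Us + 1"
  shows "a = n1 + 1 \<or> b = n2 + 1"
  using assms unfolding same_adjacency_def config_vertices_def by (fastforce simp: kprod_adj_iff)

lemma config_separates_layers:
  assumes g: "rect_config n1 n2 Us Vs"
    and x: "(a, b, c) \<in> kprod_verts (n1 + 1) (n2 + 1) (length Us + 1) - config_vertices n1 n2 Us Vs"
    and y: "(a, b, c') \<in> kprod_verts (n1 + 1) (n2 + 1) (length Us + 1) - config_vertices n1 n2 Us Vs"
    and "c \<noteq> c'"
  shows "\<not> same_adjacency (config_vertices n1 n2 Us Vs) (a, b, c) (a, b, c')"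
proof
  let ?W = "config_vertices n1 n2 Us Vs" and ?K = "length Us"
  assume same: "same_adjacency ?W (a, b, c) (a, b, c')"
  have r: "1 \<le> a" "1 \<le> b" "1 \<le> c" "c \<le> ?K + 1" "1 \<le> c'" "c' \<le> ?K + 1"
    "(a, b, c) \<notin> ?W" "(a, b, c') \<notin> ?W"
    using x y by (auto simp: kprod_verts_def)
  note corner = config_same_adjacency_corner[OF g] and bounds = config_same_adjacency_cell_bounds[OF g]
  consider "c \<le> ?K" "c' \<le> ?K" | "c = ?K + 1" | "c' = ?K + 1" using r by linarith
  then show False
  proof cases
    case 1
    then have "c - 1 = c' - 1"
      using rect_config_corner_inj[OF g _ _ corner[of a b c c'] corner[of a b c' c]] same_adjacency_sym[OF same]
        same r \<open>c \<noteq> c'\<close> by auto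
    then show False using r \<open>c \<noteq> c'\<close> by simp
  next
    case 2
    then show False
      using config_same_adjacency_top[of n1 n2 Us Vs a b c'] bounds[of a b c' c] same same_adjacency_sym[OF same]
        r \<open>c \<noteq> c'\<close> by fastforce
  next
    case 3
    then show False
      using config_same_adjacency_top[of n1 n2 Us Vs a b c] bounds[of a b c c'] same same_adjacency_sym[OF same]
        r \<open>c \<noteq> c'\<close> by fastforce
  qed
qed

lemma good_config_resolving:
  assumes g: "good_config n1 n2 Us Vs" and n: "2 \<le> n1" "2 \<le> n2" "2 \<le> length Us"
  shows "resolving (kprod_verts (n1 + 1) (n2 + 1) (length Us + 1)) kprod_adj (config_vertices n1 n2 Us Vs)"
proof -
  let ?V = "kprod_verts (n1 + 1) (n2 + 1) (length Us + 1)" and ?W = "config_vertices n1 n2 Us Vs"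
  have r: "rect_config n1 n2 Us Vs" using g by (simp add: good_config_def)
  have "\<not> same_adjacency ?W x y" if x: "x \<in> ?V - ?W" and y: "y \<in> ?V - ?W" and "x \<noteq> y" for x y
  proof
    assume same: "same_adjacency ?W x y"
    have "fst x = fst y"
      using good_config_row_separates[OF g, of x y] good_config_row_separates[OF g, of y x]
        same same_adjacency_sym[OF same] x y by (fastforce simp: kprod_verts_iff)
    moreover have "fst (snd x) = fst (snd y)"
      using good_config_col_separates[OF g, of x y] good_config_col_separates[OF g, of y x]
        same same_adjacency_sym[OF same] x y by (fastforce simp: kprod_verts_iff)
    ultimately show False
      using config_separates_layers[OF r, of "fst x" "fst (snd x)" "snd (snd x)" "snd (snd y)"]
        x y same \<open>x \<noteq> y\<close> by (cases x; cases y) auto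
  qed
  then show ?thesis
    using config_vertices_subset[OF r] n by (simp add: kprod_resolving_iff)
qed

section \<open>Growing configurations\<close>

lemma rect_config_mono:
  "rect_config n1 n2 Us Vs \<Longrightarrow> n1 \<le> n1' \<Longrightarrow> n2 \<le> n2' \<Longrightarrow> rect_config n1' n2' Us Vs"
  unfolding rect_config_def opposite_cells_def by fastforce

lemma rect_config_cell_bounds:
  assumes "rect_config n1 n2 Us Vs" "e \<in> set (Us @ Vs)"
  shows "fst e < n1 \<and> snd e < n2"
  using placed_cells_of_set[OF assms] rect_config_placed_bounds[OF assms(1)] by metis

lemma rect_config_corner_set_bounds:
  assumes "rect_config n1 n2 Us Vs" "p \<in> set (map2 corner_a Us Vs @ map2 corner_b Us Vs)"
  shows "fst p < n1 \<and> snd p < n2"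
proof -
  have "\<forall>q\<in>set (zip Us Vs). opposite_cells n1 n2 (fst q) (snd q)"
    using assms(1) by (simp add: rect_config_def)
  then show ?thesis using assms(2) by (auto simp: opposite_cells_def corner_a_def corner_b_def)
qed

lemma distinct_append_interleave:
  "distinct (A @ C) \<Longrightarrow> distinct (B @ D) \<Longrightarrow> set (A @ C) \<inter> set (B @ D) = {} \<Longrightarrow>
    distinct ((A @ B) @ (C @ D))"
  by (simp add: distinct_append) blast

lemma rect_config_append:
  assumes c: "rect_config n1 n2 Us Vs" and c': "rect_config n1 n2 Us' Vs'"
    and cells: "set (Us @ Vs) \<inter> set (Us' @ Vs') = {}"
    and corners: "set (map2 corner_a Us Vs @ map2 corner_b Us Vs) \<inter>
      set (map2 corner_a Us' Vs' @ map2 corner_b Us' Vs') = {}"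
  shows "rect_config n1 n2 (Us @ Us') (Vs @ Vs')"
proof -
  have l: "length Us = length Vs" "length Us' = length Vs'" using c c' by (auto simp: rect_config_def)
  then have z: "zip (Us @ Us') (Vs @ Vs') = zip Us Vs @ zip Us' Vs'" by simp
  have "distinct ((Us @ Us') @ (Vs @ Vs'))"
    using c c' cells distinct_append_interleave by (auto simp: rect_config_def)
  moreover have "distinct (map2 corner_a (Us @ Us') (Vs @ Vs') @ map2 corner_b (Us @ Us') (Vs @ Vs'))"
    using c c' corners distinct_append_interleave unfolding z rect_config_def by (metis map_append)
  ultimately show ?thesis using c c' l z unfolding rect_config_def by auto
qed

lemma rows_hit3_append_mono: "rows_hit3 n (A @ C) \<Longrightarrow> rows_hit3 n ((A @ B) @ (C @ D))"
  unfolding rows_hit3_def by (auto intro: le_trans)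

lemma cols_hit3_append_mono: "cols_hit3 n (A @ C) \<Longrightarrow> cols_hit3 n ((A @ B) @ (C @ D))"
  unfolding cols_hit3_def by (auto intro: le_trans)

lemma rect_config_swap:
  assumes c: "rect_config n1 n2 Us Vs"
  shows "rect_config n2 n1 (map prod.swap Us) (map prod.swap Vs)"
proof -
  have a: "map2 corner_a (map prod.swap Us) (map prod.swap Vs) = map prod.swap (map2 corner_b Us Vs)"
    and b: "map2 corner_b (map prod.swap Us) (map prod.swap Vs) = map prod.swap (map2 corner_a Us Vs)"
    by (simp_all add: zip_map_map corner_a_def corner_b_def case_prod_beta)
  have "distinct (map2 corner_a Us Vs @ map2 corner_b Us Vs)"
    using c by (simp add: rect_config_def)
  then have "distinct (map2 corner_b Us Vs @ map2 corner_a Us Vs)"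
    by (metis distinct_append Int_commute)
  then have "distinct (map2 corner_a (map prod.swap Us) (map prod.swap Vs) @
      map2 corner_b (map prod.swap Us) (map prod.swap Vs))"
    unfolding a b by (simp only: distinct_map inj_swap flip: map_append)
  moreover have "distinct (map prod.swap Us @ map prod.swap Vs)"
    using c by (simp add: rect_config_def distinct_map flip: map_append)
  ultimately show ?thesis
    using c by (auto simp: rect_config_def zip_map_map opposite_cells_def)
qed

lemma rows_hit3_swap: "rows_hit3 n L \<Longrightarrow> cols_hit3 n (map prod.swap L)"
  unfolding rows_hit3_def cols_hit3_def by (simp add: filter_map comp_def)

lemma cols_hit3_swap: "cols_hit3 n L \<Longrightarrow> rows_hit3 n (map prod.swap L)"
  unfolding rows_hit3_def cols_hit3_def by (simp add: filter_map comp_def)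

lemma good_config_swap:
  "good_config n1 n2 Us Vs \<Longrightarrow> good_config n2 n1 (map prod.swap Us) (map prod.swap Vs)"
  unfolding good_config_def using rect_config_swap rows_hit3_swap cols_hit3_swap by (metis map_append)

lemma mod_add_left_inj:
  fixes m m' n s :: nat
  assumes "m < n" "m' < n" "(s + m) mod n = (s + m') mod n"
  shows "m = m'"
proof -
  have key: "a = b" if "a \<le> b" "b < n" "(s + a) mod n = (s + b) mod n" for a b
  proof -
    have "n dvd b - a" using that mod_eq_dvd_iff_nat[of "s + a" "s + b" n] by simp
    then show ?thesis using that nat_dvd_not_less[of "b - a" n] by linarith
  qed
  show ?thesis using key[of m m'] key[of m' m] assms by (cases "m \<le> m'") auto
qed

lemma mod_neq_Suc_mod: "2 \<le> (n::nat) \<Longrightarrow> k mod n \<noteq> Suc k mod n"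
  by (simp add: mod_Suc)

text \<open>A strip of k layers in the two rows r and r + 1: layer m joins column s + m of row r
  to column s + m + 1 of row r + 1, cyclically modulo n. Its other corners lie in the same two
  rows, shifted by one column, so they are pairwise distinct as long as k \<le> n.\<close>

definition strip_U :: "nat \<Rightarrow> nat \<Rightarrow> nat \<Rightarrow> nat \<Rightarrow> cell list" where
  "strip_U r n s k = map (\<lambda>m. (r, (s + m) mod n)) [0..<k]"

definition strip_V :: "nat \<Rightarrow> nat \<Rightarrow> nat \<Rightarrow> nat \<Rightarrow> cell list" where
  "strip_V r n s k = map (\<lambda>m. (r + 1, (s + m + 1) mod n)) [0..<k]"

lemma zip_map_map_same: "zip (map f xs) (map g xs) = map (\<lambda>x. (f x, g x)) xs"
  by (induction xs) auto

lemma rect_config_strip: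
  assumes n: "2 \<le> n" "k \<le> n"
  shows "rect_config (r + 2) n (strip_U r n s k) (strip_V r n s k)"
proof -
  have z: "zip (strip_U r n s k) (strip_V r n s k) =
      map (\<lambda>m. ((r, (s + m) mod n), (r + 1, (s + m + 1) mod n))) [0..<k]"
    unfolding strip_U_def strip_V_def by (rule zip_map_map_same)
  have inj: "inj_on (\<lambda>m. (t, (s' + m) mod n)) {0..<k}" for t s' :: nat
  proof (rule inj_onI)
    fix a b assume "a \<in> {0..<k}" "b \<in> {0..<k}" "(t, (s' + a) mod n) = (t, (s' + b) mod n)"
    then show "a = b" using n mod_add_left_inj[of a n b s'] by simp
  qed
  have inj': "inj_on (\<lambda>m. (t, (s + m + 1) mod n)) {0..<k}" for t :: nat
    using inj[of t "s + 1"] by (simp add: ac_simps)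
  have "map2 corner_a (strip_U r n s k) (strip_V r n s k) = map (\<lambda>m. (r, (s + m + 1) mod n)) [0..<k]"
    "map2 corner_b (strip_U r n s k) (strip_V r n s k) = map (\<lambda>m. (r + 1, (s + m) mod n)) [0..<k]"
    unfolding z by (simp_all add: corner_a_def corner_b_def)
  moreover have "\<forall>p\<in>set (zip (strip_U r n s k) (strip_V r n s k)). opposite_cells (r + 2) n (fst p) (snd p)"
    unfolding z using n mod_neq_Suc_mod[of n] by (auto simp: opposite_cells_def)
  ultimately show ?thesis
    unfolding rect_config_def using inj inj'
    by (auto simp: strip_U_def strip_V_def distinct_map)
qed

lemma strip_cells_ge: "e \<in> set (strip_U r n s k @ strip_V r n s k) \<Longrightarrow> r \<le> fst e"
  unfolding strip_U_def strip_V_def by auto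

lemma strip_corners_ge:
  "p \<in> set (map2 corner_a (strip_U r n s k) (strip_V r n s k) @ map2 corner_b (strip_U r n s k) (strip_V r n s k))
    \<Longrightarrow> r \<le> fst p"
  unfolding strip_U_def strip_V_def by (auto simp: zip_map_map_same corner_a_def corner_b_def)

lemma length_filter_strip_U: "length (filter (\<lambda>e. fst e = r) (strip_U r n s k)) = k"
  by (simp add: strip_U_def filter_id_conv)

lemma length_filter_strip_V: "length (filter (\<lambda>e. fst e = r + 1) (strip_V r n s k)) = k"
  by (simp add: strip_V_def filter_id_conv)

lemma rect_config_append_strip:
  assumes c: "rect_config n1 n2 Us Vs" and n: "2 \<le> n2" "k \<le> n2"
  shows "rect_config (n1 + 2) n2 (Us @ strip_U n1 n2 s k) (Vs @ strip_V n1 n2 s k)"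
proof (rule rect_config_append)
  show "rect_config (n1 + 2) n2 Us Vs" using rect_config_mono[OF c] by simp
  show "rect_config (n1 + 2) n2 (strip_U n1 n2 s k) (strip_V n1 n2 s k)" by (rule rect_config_strip[OF n])
  show "set (Us @ Vs) \<inter> set (strip_U n1 n2 s k @ strip_V n1 n2 s k) = {}"
    using rect_config_cell_bounds[OF c] strip_cells_ge by (meson disjoint_iff not_le)
  show "set (map2 corner_a Us Vs @ map2 corner_b Us Vs) \<inter>
    set (map2 corner_a (strip_U n1 n2 s k) (strip_V n1 n2 s k) @ map2 corner_b (strip_U n1 n2 s k) (strip_V n1 n2 s k)) = {}"
    using rect_config_corner_set_bounds[OF c] strip_corners_ge by (meson disjoint_iff not_le)
qed

lemma rows_hit3_append_strip:
  assumes "rows_hit3 n1 (Us @ Vs)" "3 \<le> k"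
  shows "rows_hit3 (n1 + 2) ((Us @ strip_U n1 n2 s k) @ (Vs @ strip_V n1 n2 s k))"
  unfolding rows_hit3_def
proof (intro allI impI)
  fix r assume "r < n1 + 2"
  then consider "r < n1" | "r = n1" | "r = n1 + 1" by linarith
  then show "3 \<le> length (filter (\<lambda>e. fst e = r) ((Us @ strip_U n1 n2 s k) @ (Vs @ strip_V n1 n2 s k)))"
  proof cases
    case 1
    then show ?thesis using rows_hit3_append_mono[OF assms(1)] unfolding rows_hit3_def by blast
  qed (use assms(2) length_filter_strip_U[of n1 n2 s k] length_filter_strip_V[of n1 n2 s k] in simp_all)
qed

lemma good_config_add_rows:
  assumes g: "good_config n1 n2 Us Vs" and n: "2 \<le> n2" "3 \<le> k" "k \<le> n2"
  shows "good_config (n1 + 2) n2 (Us @ strip_U n1 n2 s k) (Vs @ strip_V n1 n2 s k)"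
  using rect_config_append_strip[OF _ n(1,3)] rows_hit3_append_strip[OF _ n(2)] cols_hit3_append_mono g
  unfolding good_config_def by simp

lemma good_config_add_cols:
  assumes g: "good_config n1 n2 Us Vs" and n: "2 \<le> n1" "3 \<le> k" "k \<le> n1"
  obtains Us' Vs' where "good_config n1 (n2 + 2) Us' Vs'" "length Us' = length Us + k"
proof -
  have "good_config (n2 + 2) n1 (map prod.swap Us @ strip_U n2 n1 0 k) (map prod.swap Vs @ strip_V n2 n1 0 k)"
    by (rule good_config_add_rows[OF good_config_swap[OF g] n])
  from good_config_swap[OF this] show thesis
    by (rule that) (simp add: strip_U_def)
qed

text \<open>Both dimensions grow by two: a transposed strip of k2 layers fills the new columns, then a
  strip of k1 layers fills the new rows. The latter starts at column n2 - 1 so that it meets both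
  new columns twice, and the transposed strip supplies the third cell of each.\<close>

lemma good_config_grow:
  assumes g: "good_config n1 n2 Us Vs" and n: "2 \<le> n1" "1 \<le> n2"
    and k: "3 \<le> k1" "k1 \<le> n2 + 2" "1 \<le> k2" "k2 \<le> n1"
  obtains Us' Vs' where "good_config (n1 + 2) (n2 + 2) Us' Vs'" "length Us' = length Us + k1 + k2"
proof -
  let ?CU = "map prod.swap (strip_U n2 n1 0 k2)" and ?CV = "map prod.swap (strip_V n2 n1 0 k2)"
  let ?RU = "strip_U n1 (n2 + 2) (n2 - 1) k1" and ?RV = "strip_V n1 (n2 + 2) (n2 - 1) k1"
  let ?Us = "(Us @ ?CU) @ ?RU" and ?Vs = "(Vs @ ?CV) @ ?RV"
  have c: "rect_config n1 n2 Us Vs" and R: "rows_hit3 n1 (Us @ Vs)" and C: "cols_hit3 n2 (Us @ Vs)"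
    using g by (auto simp: good_config_def)
  have "rect_config (n2 + 2) n1 (map prod.swap Us @ strip_U n2 n1 0 k2) (map prod.swap Vs @ strip_V n2 n1 0 k2)"
    by (rule rect_config_append_strip[OF rect_config_swap[OF c] n(1) k(4)])
  from rect_config_swap[OF this] have "rect_config n1 (n2 + 2) (Us @ ?CU) (Vs @ ?CV)"
    by (simp add: comp_def)
  then have rect: "rect_config (n1 + 2) (n2 + 2) ?Us ?Vs"
    by (rule rect_config_append_strip) (use k in auto)
  have rows: "rows_hit3 (n1 + 2) (?Us @ ?Vs)"
    by (rule rows_hit3_append_strip[OF rows_hit3_append_mono[OF R] k(1)])
  have new_cols: "{(n1, n2), (n1 + 1, n2), (0, n2)} \<subseteq> set (?Us @ ?Vs)"
    "{(n1, n2 + 1), (n1 + 1, n2 + 1), (1, n2 + 1)} \<subseteq> set (?Us @ ?Vs)"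
    using k n unfolding strip_U_def strip_V_def
    by (auto intro: image_eqI[where x = 0] image_eqI[where x = 1] image_eqI[where x = 2])
  have cols: "cols_hit3 (n2 + 2) (?Us @ ?Vs)"
    unfolding cols_hit3_def
  proof (intro allI impI)
    fix c assume "c < n2 + 2"
    then consider "c < n2" | "c = n2" | "c = n2 + 1" by linarith
    then show "3 \<le> length (filter (\<lambda>e. snd e = c) (?Us @ ?Vs))"
    proof cases
      case 1
      then show ?thesis
        using cols_hit3_append_mono[OF cols_hit3_append_mono[OF C]] unfolding cols_hit3_def by blast
    next
      case 2
      then show ?thesis using n by (intro three_le_length_filterI[OF new_cols(1)]) auto
    next
      case 3
      then show ?thesis using n by (intro three_le_length_filterI[OF new_cols(2)]) auto
    qed
  qed
  show thesis
    using rect rows cols by (intro that) (auto simp: good_config_def strip_U_def)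
qed

text \<open>Growing both dimensions by two with only three new layers: the cells v0, v1 of the first two
  layers are moved to (n1, n2) and (n1 + 1, n2 + 1), and the three new layers put cells back into
  the rows of v0, v1 (in the new columns) and into their columns (in the new rows). Admissibility
  of the first two layers is what keeps all new layers and corners valid, and it is inherited.\<close>

definition surgery_admissible :: "cell list \<Rightarrow> cell list \<Rightarrow> bool" where
  "surgery_admissible Us Vs \<longleftrightarrow> 2 \<le> length Us \<and>
     fst (Vs ! 0) \<noteq> fst (Us ! 1) \<and> fst (Vs ! 1) \<noteq> fst (Us ! 0) \<and> snd (Vs ! 1) \<noteq> snd (Us ! 0) \<and>
     snd (Vs ! 0) \<noteq> snd (Us ! 1) \<and> snd (Vs ! 0) \<noteq> snd (Vs ! 1) \<and> fst (Vs ! 0) \<noteq> fst (Vs ! 1)"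

definition surgery_U :: "nat \<Rightarrow> nat \<Rightarrow> cell list \<Rightarrow> cell list \<Rightarrow> cell list" where
  "surgery_U n1 n2 Us Vs = Us @ [(n1, n2 + 1), (n1 + 1, n2), (n1, snd (Vs ! 0))]"

definition surgery_V :: "nat \<Rightarrow> nat \<Rightarrow> cell list \<Rightarrow> cell list" where
  "surgery_V n1 n2 Vs = (n1, n2) # (n1 + 1, n2 + 1) # drop 2 Vs @
     [(fst (Vs ! 0), n2), (fst (Vs ! 1), n2 + 1), (n1 + 1, snd (Vs ! 1))]"

lemma distinct_surgery_corners:
  fixes X Y :: "cell list"
  assumes "distinct (X @ Y)" and XY: "\<And>x. x \<in> set (X @ Y) \<Longrightarrow> fst x < n1 \<and> snd x < n2"
    and "fu0 < n1" "su0 < n2" "fv0 < n1" "sv0 < n2" "fu1 < n1" "su1 < n2" "fv1 < n1" "sv1 < n2"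
    "fv0 \<noteq> fu1" "fv1 \<noteq> fu0" "sv1 \<noteq> su0" "sv0 \<noteq> su1"
  shows "distinct (((fu0, n2) # (fu1, n2 + 1) # X @ [(n1, n2), (n1 + 1, n2 + 1), (n1, sv1)]) @
     ((n1, su0) # (n1 + 1, su1) # Y @ [(fv0, n2 + 1), (fv1, n2), (n1 + 1, sv0)]))"
proof -
  have "a < n1 \<and> b < n2" if "(a, b) \<in> set X \<or> (a, b) \<in> set Y" for a b
    using XY[of "(a, b)"] that by auto
  then show ?thesis using assms(1,3-) by fastforce
qed

lemma surgery_rect_config:
  assumes c: "rect_config n1 n2 (u0 # u1 # Ur) (v0 # v1 # Vr)"
    and a: "surgery_admissible (u0 # u1 # Ur) (v0 # v1 # Vr)"
  shows "rect_config (n1 + 2) (n2 + 2) (surgery_U n1 n2 (u0 # u1 # Ur) (v0 # v1 # Vr))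
    (surgery_V n1 n2 (v0 # v1 # Vr))"
proof -
  have D: "fst v0 \<noteq> fst u1" "fst v1 \<noteq> fst u0" "snd v1 \<noteq> snd u0" "snd v0 \<noteq> snd u1"
    "snd v0 \<noteq> snd v1" "fst v0 \<noteq> fst v1"
    using a by (auto simp: surgery_admissible_def)
  have lr: "length Vr = length Ur" using c by (simp add: rect_config_def)
  have ok: "opposite_cells n1 n2 u0 v0" "opposite_cells n1 n2 u1 v1"
    "\<forall>p\<in>set (zip Ur Vr). opposite_cells n1 n2 (fst p) (snd p)"
    using c by (auto simp: rect_config_def)
  then have r: "fst u0 < n1" "snd u0 < n2" "fst v0 < n1" "snd v0 < n2"
    "fst u1 < n1" "snd u1 < n2" "fst v1 < n1" "snd v1 < n2"
    by (auto simp: opposite_cells_def)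
  have old: "distinct (u0 # u1 # Ur @ v0 # v1 # Vr)"
    "distinct (map2 corner_a Ur Vr @ map2 corner_b Ur Vr)"
    using c by (auto simp: rect_config_def)
  have bounds: "\<And>x. x \<in> set (Ur @ Vr) \<Longrightarrow> fst x < n1 \<and> snd x < n2"
    "\<And>x. x \<in> set (map2 corner_a Ur Vr @ map2 corner_b Ur Vr) \<Longrightarrow> fst x < n1 \<and> snd x < n2"
    using rect_config_cell_bounds[OF c] rect_config_corner_set_bounds[OF c] by auto
  let ?U = "u0 # u1 # Ur @ [(n1, n2 + 1), (n1 + 1, n2), (n1, snd v0)]"
  let ?V = "(n1, n2) # (n1 + 1, n2 + 1) # Vr @ [(fst v0, n2), (fst v1, n2 + 1), (n1 + 1, snd v1)]"
  have z: "zip ?U ?V = (u0, (n1, n2)) # (u1, (n1 + 1, n2 + 1)) # zip Ur Vr @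
      [((n1, n2 + 1), (fst v0, n2)), ((n1 + 1, n2), (fst v1, n2 + 1)), ((n1, snd v0), (n1 + 1, snd v1))]"
    using lr by simp
  have "rect_config (n1 + 2) (n2 + 2) ?U ?V"
    unfolding rect_config_def
  proof (intro conjI)
    show "length ?U = length ?V" using lr by simp
    show "\<forall>p\<in>set (zip ?U ?V). opposite_cells (n1 + 2) (n2 + 2) (fst p) (snd p)"
      unfolding z using r D ok(3) by (auto simp: opposite_cells_def)
    show "distinct (?U @ ?V)" using old(1) r bounds(1) by fastforce
    have "map2 corner_a ?U ?V =
        (fst u0, n2) # (fst u1, n2 + 1) # map2 corner_a Ur Vr @ [(n1, n2), (n1 + 1, n2 + 1), (n1, snd v1)]"
      "map2 corner_b ?U ?V =
        (n1, snd u0) # (n1 + 1, snd u1) # map2 corner_b Ur Vr @ [(fst v0, n2 + 1), (fst v1, n2), (n1 + 1, snd v0)]"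
      unfolding z by (simp_all add: corner_a_def corner_b_def)
    then show "distinct (map2 corner_a ?U ?V @ map2 corner_b ?U ?V)"
      using distinct_surgery_corners[OF old(2) bounds(2) r(1,2,3,4,5,6,7,8) D(1-4)] by simp
  qed
  then show ?thesis by (simp add: surgery_U_def surgery_V_def)
qed

lemma surgery_rows_hit3:
  assumes c: "rect_config n1 n2 (u0 # u1 # Ur) (v0 # v1 # Vr)"
    and R: "rows_hit3 n1 ((u0 # u1 # Ur) @ (v0 # v1 # Vr))"
  shows "rows_hit3 (n1 + 2) (surgery_U n1 n2 (u0 # u1 # Ur) (v0 # v1 # Vr) @ surgery_V n1 n2 (v0 # v1 # Vr))"
  unfolding rows_hit3_def
proof (intro allI impI)
  let ?L = "surgery_U n1 n2 (u0 # u1 # Ur) (v0 # v1 # Vr) @ surgery_V n1 n2 (v0 # v1 # Vr)"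
  have v: "snd v0 < n2" "snd v1 < n2" using rect_config_cell_bounds[OF c] by simp_all
  fix r assume "r < n1 + 2"
  then consider "r < n1" | "r = n1" | "r = n1 + 1" by linarith
  then show "3 \<le> length (filter (\<lambda>e. fst e = r) ?L)"
  proof cases
    case 1
    then have "length (filter (\<lambda>e. fst e = r) ?L) = length (filter (\<lambda>e. fst e = r) ((u0 # u1 # Ur) @ (v0 # v1 # Vr)))"
      by (simp add: surgery_U_def surgery_V_def)
    then show ?thesis using R 1 by (simp add: rows_hit3_def)
  next
    case 2
    then show ?thesis
      using v by (intro three_le_length_filterI[of "(n1, n2 + 1)" "(n1, snd v0)" "(n1, n2)"])
        (auto simp: surgery_U_def surgery_V_def)
  next
    case 3
    then show ?thesis
      using v by (intro three_le_length_filterI[of "(n1 + 1, n2)" "(n1 + 1, n2 + 1)" "(n1 + 1, snd v1)"])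
        (auto simp: surgery_U_def surgery_V_def)
  qed
qed

lemma surgery_cols_hit3:
  assumes c: "rect_config n1 n2 (u0 # u1 # Ur) (v0 # v1 # Vr)"
    and C: "cols_hit3 n2 ((u0 # u1 # Ur) @ (v0 # v1 # Vr))"
  shows "cols_hit3 (n2 + 2) (surgery_U n1 n2 (u0 # u1 # Ur) (v0 # v1 # Vr) @ surgery_V n1 n2 (v0 # v1 # Vr))"
  unfolding cols_hit3_def
proof (intro allI impI)
  let ?L = "surgery_U n1 n2 (u0 # u1 # Ur) (v0 # v1 # Vr) @ surgery_V n1 n2 (v0 # v1 # Vr)"
  have v: "fst v0 < n1" "fst v1 < n1" using rect_config_cell_bounds[OF c] by simp_all
  fix r assume "r < n2 + 2"
  then consider "r < n2" | "r = n2" | "r = n2 + 1" by linarith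
  then show "3 \<le> length (filter (\<lambda>e. snd e = r) ?L)"
  proof cases
    case 1
    then have "length (filter (\<lambda>e. snd e = r) ?L) = length (filter (\<lambda>e. snd e = r) ((u0 # u1 # Ur) @ (v0 # v1 # Vr)))"
      by (simp add: surgery_U_def surgery_V_def)
    then show ?thesis using C 1 by (simp add: cols_hit3_def)
  next
    case 2
    then show ?thesis
      using v by (intro three_le_length_filterI[of "(n1 + 1, n2)" "(n1, n2)" "(fst v0, n2)"])
        (auto simp: surgery_U_def surgery_V_def)
  next
    case 3
    then show ?thesis
      using v by (intro three_le_length_filterI[of "(n1, n2 + 1)" "(n1 + 1, n2 + 1)" "(fst v1, n2 + 1)"])
        (auto simp: surgery_U_def surgery_V_def)
  qed
qed

lemma good_config_surgery:
  assumes g: "good_config n1 n2 Us Vs" and a: "surgery_admissible Us Vs"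
  obtains Us' Vs' where "good_config (n1 + 2) (n2 + 2) Us' Vs'" "surgery_admissible Us' Vs'"
    "length Us' = length Us + 3"
proof -
  have c: "rect_config n1 n2 Us Vs" using g by (simp add: good_config_def)
  have "2 \<le> length Us" "2 \<le> length Vs" using a c by (auto simp: surgery_admissible_def rect_config_def)
  then obtain u0 u1 Ur v0 v1 Vr where Us: "Us = u0 # u1 # Ur" and Vs: "Vs = v0 # v1 # Vr"
    by (metis One_nat_def Suc_1 Suc_le_length_iff)
  moreover have "fst u0 < n1" "snd u0 < n2" "fst u1 < n1" "snd u1 < n2"
    using rect_config_cell_bounds[OF c] Us by simp_all
  ultimately have adm: "surgery_admissible (surgery_U n1 n2 Us Vs) (surgery_V n1 n2 Vs)"
    by (simp add: surgery_admissible_def surgery_U_def surgery_V_def)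
  have good: "good_config (n1 + 2) (n2 + 2) (surgery_U n1 n2 Us Vs) (surgery_V n1 n2 Vs)"
    using g a unfolding good_config_def Us Vs
    by (intro conjI surgery_rect_config surgery_rows_hit3 surgery_cols_hit3) simp_all
  show thesis by (rule that[OF good adm]) (simp add: surgery_U_def)
qed

section \<open>Existence of configurations\<close>

text \<open>The smallest cases, which neither growth step reaches, are settled by explicit configurations.\<close>

lemma admissible_good_config_base:
  assumes "(n1, n2) \<in> {(3, 4), (4, 4), (4, 5), (5, 5)}"
  shows "\<exists>Us Vs. good_config n1 n2 Us Vs \<and> surgery_admissible Us Vs \<and> length Us = (3 * n2 + 1) div 2"
proof -
  consider "n1 = 3" "n2 = 4" | "n1 = 4" "n2 = 4" | "n1 = 4" "n2 = 5" | "n1 = 5" "n2 = 5"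
    using assms by auto
  then show ?thesis
  proof cases
    case 1
    show ?thesis unfolding 1
      by (intro exI[of _ "[(1,1), (1,3), (0,2), (1,2), (2,3), (2,1)]"]
          exI[of _ "[(2,2), (0,0), (2,0), (0,1), (1,0), (0,3)]"]) code_simp
  next
    case 2
    show ?thesis unfolding 2
      by (intro exI[of _ "[(2,3), (3,1), (3,3), (0,1), (0,0), (3,2)]"]
          exI[of _ "[(1,0), (0,2), (2,1), (1,2), (1,3), (2,0)]"]) code_simp
  next
    case 3
    show ?thesis unfolding 3
      by (intro exI[of _ "[(3,0), (2,1), (0,1), (2,2), (1,4), (0,4), (1,0), (1,1)]"]
          exI[of _ "[(1,3), (0,2), (2,0), (0,0), (0,3), (2,3), (3,4), (3,2)]"]) code_simp
  next
    case 4
    show ?thesis unfolding 4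
      by (intro exI[of _ "[(4,1), (3,3), (1,0), (4,2), (4,0), (0,3), (3,0), (0,2)]"]
          exI[of _ "[(2,2), (0,4), (3,1), (2,4), (2,3), (1,1), (0,1), (1,4)]"]) code_simp
  qed
qed

lemma good_config_small:
  assumes "3 \<le> n1" "n1 \<le> n2" "n2 \<le> n1 + 1" "n2 \<le> 5" "(3 * n2 + 1) div 2 < K" "2 * K \<le> n1 * n2"
  shows "\<exists>Us Vs. good_config n1 n2 Us Vs \<and> length Us = K"
proof -
  have "n1 = 3 \<or> n1 = 4 \<or> n1 = 5" "n2 = n1 \<or> n2 = n1 + 1" using assms(1-4) by linarith+
  then have "n1 = 4 \<and> n2 = 4 \<and> (K = 7 \<or> K = 8) \<or> n1 = 4 \<and> n2 = 5 \<and> (K = 9 \<or> K = 10) \<or>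
      n1 = 5 \<and> n2 = 5 \<and> (K = 9 \<or> K = 10 \<or> K = 11 \<or> K = 12)"
    using assms(4-6) by (elim disjE) (simp_all, presburger+)
  then consider "n1 = 4" "n2 = 4" "K = 7" | "n1 = 4" "n2 = 4" "K = 8" | "n1 = 4" "n2 = 5" "K = 9"
    | "n1 = 4" "n2 = 5" "K = 10" | "n1 = 5" "n2 = 5" "K = 9" | "n1 = 5" "n2 = 5" "K = 10"
    | "n1 = 5" "n2 = 5" "K = 11" | "n1 = 5" "n2 = 5" "K = 12"
    by blast
  then show ?thesis
  proof cases
    case 1
    show ?thesis unfolding 1
      by (intro exI[of _ "[(3,1), (0,2), (3,3), (2,1), (2,3), (2,2), (2,0)]"]
          exI[of _ "[(0,0), (1,0), (1,1), (1,2), (3,0), (0,1), (1,3)]"]) code_simp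
  next
    case 2
    show ?thesis unfolding 2
      by (intro exI[of _ "[(3,2), (0,3), (1,3), (2,3), (1,2), (2,1), (2,2), (0,2)]"]
          exI[of _ "[(0,0), (1,0), (0,1), (3,1), (2,0), (3,3), (3,0), (1,1)]"]) code_simp
  next
    case 3
    show ?thesis unfolding 3
      by (intro exI[of _ "[(2,0), (1,1), (2,3), (0,4), (1,4), (3,4), (2,4), (1,3), (3,1)]"]
          exI[of _ "[(0,3), (2,2), (0,0), (3,2), (0,1), (2,1), (1,2), (3,0), (0,2)]"]) code_simp
  next
    case 4
    show ?thesis unfolding 4
      by (intro exI[of _ "[(2,3), (3,1), (3,0), (0,2), (2,2), (1,0), (1,1), (2,4), (0,4), (0,3)]"]
          exI[of _ "[(0,1), (1,3), (2,1), (1,4), (3,4), (3,3), (0,0), (3,2), (1,2), (2,0)]"]) code_simp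
  next
    case 5
    show ?thesis unfolding 5
      by (intro exI[of _ "[(2,3), (1,2), (4,1), (2,4), (0,4), (4,4), (3,4), (3,2), (0,1)]"]
          exI[of _ "[(3,1), (0,0), (1,0), (0,3), (3,0), (2,2), (4,0), (1,1), (4,3)]"]) code_simp
  next
    case 6
    show ?thesis unfolding 6
      by (intro exI[of _ "[(3,4), (1,1), (2,1), (0,2), (2,3), (1,2), (3,1), (4,3), (4,1), (0,3)]"]
          exI[of _ "[(4,0), (4,2), (0,4), (3,3), (1,0), (2,4), (1,4), (3,2), (3,0), (4,4)]"]) code_simp
  next
    case 7
    show ?thesis unfolding 7
      by (intro exI[of _ "[(3,0), (2,0), (2,2), (0,2), (3,1), (3,2), (0,3), (0,4), (0,1), (3,3), (4,2)]"]
          exI[of _ "[(1,2), (4,1), (0,0), (4,3), (1,4), (1,3), (4,0), (2,1), (3,4), (1,0), (2,4)]"]) code_simp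
  next
    case 8
    show ?thesis unfolding 8
      by (intro exI[of _ "[(2,1), (4,0), (0,1), (3,4), (2,3), (1,1), (0,4), (0,0), (3,3), (0,3), (1,0), (4,4)]"]
          exI[of _ "[(1,3), (3,2), (2,0), (4,3), (4,2), (3,0), (2,2), (4,1), (0,2), (1,4), (2,4), (3,1)]"]) code_simp
  qed
qed

lemma admissible_good_config_exists:
  assumes "3 \<le> n1" "n1 \<le> n2" "n2 \<le> n1 + 1" "(n1, n2) \<noteq> (3, 3)"
  shows "\<exists>Us Vs. good_config n1 n2 Us Vs \<and> surgery_admissible Us Vs \<and> length Us = (3 * n2 + 1) div 2"
  using assms
proof (induction n1 arbitrary: n2 rule: less_induct)
  case (less n1)
  show ?case
  proof (cases "(n1, n2) \<in> {(3, 4), (4, 4), (4, 5), (5, 5)}")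
    case True
    then show ?thesis by (rule admissible_good_config_base)
  next
    case False
    then have "5 \<le> n1" "(n1 - 2, n2 - 2) \<noteq> (3, 3)" using less.prems by auto
    have "\<exists>Us Vs. good_config (n1 - 2) (n2 - 2) Us Vs \<and> surgery_admissible Us Vs \<and>
        length Us = (3 * (n2 - 2) + 1) div 2"
      by (rule less.IH) (use less.prems \<open>5 \<le> n1\<close> \<open>(n1 - 2, n2 - 2) \<noteq> (3, 3)\<close> in auto)
    then obtain Us Vs where g: "good_config (n1 - 2) (n2 - 2) Us Vs" and a: "surgery_admissible Us Vs"
      and len: "length Us = (3 * (n2 - 2) + 1) div 2"
      by blast
    obtain Us' Vs' where "good_config (n1 - 2 + 2) (n2 - 2 + 2) Us' Vs'" "surgery_admissible Us' Vs'"
      "length Us' = length Us + 3"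
      by (rule good_config_surgery[OF g a])
    moreover have "n1 - 2 + 2 = n1" "n2 - 2 + 2 = n2" "(3 * (n2 - 2) + 1) div 2 + 3 = (3 * n2 + 1) div 2"
      using \<open>5 \<le> n1\<close> less.prems by auto
    ultimately show ?thesis using len by (intro exI[of _ Us'] exI[of _ Vs']) simp
  qed
qed

lemma wide_budget_split:
  fixes n1 n2 K :: nat
  assumes p: "3 \<le> n1" "n1 + 2 \<le> n2" "3 * n2 \<le> 2 * K" "2 * K \<le> n1 * n2"
  obtains k where "3 \<le> k" "k \<le> n1" "k \<le> K" "3 * (n2 - 2) \<le> 2 * (K - k)" "2 * (K - k) \<le> n1 * (n2 - 2)"
proof -
  define q where "q = (2 * K - 3 * n2 + 6) div 2"
  define k where "k = min n1 q"
  have k3: "3 \<le> k" and kn: "k \<le> n1" unfolding k_def q_def using p by auto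
  have k2: "2 * k \<le> 2 * K - 3 * n2 + 6" unfolding k_def q_def by linarith
  have kc: "k = n1 \<or> 2 * K - 3 * n2 + 6 \<le> 2 * k + 1" unfolding k_def q_def by linarith
  have kK: "k \<le> K" using k2 p by linarith
  have "2 * (K - k) \<le> n1 * (n2 - 2)"
  proof (cases "k = n1")
    case True
    then show ?thesis using p kK by (simp add: diff_mult_distrib2)
  next
    case False
    have "4 \<le> n1"
    proof (rule ccontr)
      assume "\<not> 4 \<le> n1"
      then have "n1 = 3" using p by simp
      then have "2 * K = 3 * n2" using p by simp
      then have "k = n1" unfolding k_def q_def using \<open>n1 = 3\<close> by simp
      then show False using False by simp
    qed
    then have "4 * (n2 - 2) \<le> n1 * (n2 - 2)" by (rule mult_le_mono1)
    then show ?thesis using kc False p kK by linarith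
  qed
  moreover have "3 * (n2 - 2) \<le> 2 * (K - k)" using k2 kK p by linarith
  ultimately show thesis using that k3 kn kK by blast
qed

lemma square_budget_split:
  fixes n1 n2 K :: nat
  assumes p: "6 \<le> n2" "n1 \<le> n2" "n2 \<le> n1 + 1" "(3 * n2 + 1) div 2 < K" "2 * K \<le> n1 * n2"
  obtains K' k1 k2 where "3 * (n2 - 2) \<le> 2 * K'" "2 * K' \<le> (n1 - 2) * (n2 - 2)"
    "3 \<le> k1" "k1 \<le> n2" "1 \<le> k2" "k2 \<le> n1 - 2" "K' + k1 + k2 = K"
proof -
  define a where "a = n1 - 2"
  define b where "b = n2 - 2"
  have ab: "n1 = a + 2" "n2 = b + 2" "3 \<le> a" "a \<le> b" "b \<le> a + 1" "4 \<le> b"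
    unfolding a_def b_def using p by auto
  define Km where "Km = (3 * b + 1) div 2"
  define K' where "K' = max Km (K - (a + b + 2))"
  define d where "d = K - K'"
  define k2 where "k2 = max 1 (d - (b + 2))"
  define k1 where "k1 = d - k2"
  have Km: "(3 * n2 + 1) div 2 = Km + 3" unfolding Km_def using ab by simp
  have d: "4 \<le> d" using Km p(4) ab unfolding d_def K'_def by linarith
  have "d \<le> a + b + 2" "K' \<le> K" unfolding d_def K'_def using Km p(4) by linarith+
  have "n1 * n2 = a * b + 2 * a + 2 * b + 4" using ab by (simp add: algebra_simps)
  moreover have "2 * Km \<le> a * b"
  proof (cases "a = 3")
    case True
    then show ?thesis using ab unfolding Km_def by simp
  next
    case False
    then have "4 * b \<le> a * b" using ab by (intro mult_le_mono1) simp
    moreover have "2 * Km \<le> 3 * b + 1" unfolding Km_def by simp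
    ultimately show ?thesis using ab by linarith
  qed
  ultimately have "2 * K' \<le> a * b" using p(5) unfolding K'_def by linarith
  moreover have "3 * b \<le> 2 * K'" unfolding K'_def Km_def by linarith
  moreover have "3 \<le> k1" "k1 \<le> b + 2" "1 \<le> k2" "k2 \<le> a" "K' + k1 + k2 = K"
    using d \<open>d \<le> a + b + 2\<close> \<open>K' \<le> K\<close> ab unfolding k1_def k2_def d_def by auto
  ultimately show thesis using that ab(1,2) by simp
qed

lemma good_config_exists_wide:
  assumes p: "3 \<le> n1" "n1 + 2 \<le> n2" "3 * n2 \<le> 2 * K" "2 * K \<le> n1 * n2"
    and narrower: "\<And>K'. 3 * (n2 - 2) \<le> 2 * K' \<Longrightarrow> 2 * K' \<le> n1 * (n2 - 2) \<Longrightarrow>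
      \<exists>Us Vs. good_config n1 (n2 - 2) Us Vs \<and> length Us = K'"
  shows "\<exists>Us Vs. good_config n1 n2 Us Vs \<and> length Us = K"
proof -
  obtain k where k: "3 \<le> k" "k \<le> n1" "k \<le> K" "3 * (n2 - 2) \<le> 2 * (K - k)" "2 * (K - k) \<le> n1 * (n2 - 2)"
    using wide_budget_split[OF p] .
  then obtain Us Vs where g: "good_config n1 (n2 - 2) Us Vs" and len: "length Us = K - k"
    using narrower by blast
  obtain Us' Vs' where "good_config n1 (n2 - 2 + 2) Us' Vs'" "length Us' = length Us + k"
    by (rule good_config_add_cols[OF g]) (use p(1) k(1,2) in auto)
  moreover have "n2 - 2 + 2 = n2" "K - k + k = K" using p(2) k(3) by auto
  ultimately show ?thesis using len by (intro exI[of _ Us'] exI[of _ Vs']) simp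
qed

lemma good_config_exists_square:
  assumes p: "6 \<le> n2" "n1 \<le> n2" "n2 \<le> n1 + 1" "(3 * n2 + 1) div 2 < K" "2 * K \<le> n1 * n2"
    and smaller: "\<And>K'. 3 * (n2 - 2) \<le> 2 * K' \<Longrightarrow> 2 * K' \<le> (n1 - 2) * (n2 - 2) \<Longrightarrow>
      \<exists>Us Vs. good_config (n1 - 2) (n2 - 2) Us Vs \<and> length Us = K'"
  shows "\<exists>Us Vs. good_config n1 n2 Us Vs \<and> length Us = K"
proof -
  obtain K' k1 k2 where s: "3 * (n2 - 2) \<le> 2 * K'" "2 * K' \<le> (n1 - 2) * (n2 - 2)"
    "3 \<le> k1" "k1 \<le> n2" "1 \<le> k2" "k2 \<le> n1 - 2" "K' + k1 + k2 = K"
    using square_budget_split[OF p] .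
  then obtain Us Vs where g: "good_config (n1 - 2) (n2 - 2) Us Vs" and len: "length Us = K'"
    using smaller by blast
  obtain Us' Vs' where "good_config (n1 - 2 + 2) (n2 - 2 + 2) Us' Vs'" "length Us' = length Us + k1 + k2"
    by (rule good_config_grow[OF g]) (use s p(1-3) in auto)
  moreover have "n1 - 2 + 2 = n1" "n2 - 2 + 2 = n2" using p(1-3) by auto
  ultimately show ?thesis using s(7) len by (intro exI[of _ Us'] exI[of _ Vs']) simp
qed

lemma good_config_exists_le:
  assumes "3 \<le> n1" "n1 \<le> n2" "3 * n2 \<le> 2 * K" "2 * K \<le> n1 * n2"
  shows "\<exists>Us Vs. good_config n1 n2 Us Vs \<and> length Us = K"
  using assms
proof (induction n2 arbitrary: n1 K rule: less_induct)
  case (less n2)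
  consider "n1 + 2 \<le> n2" | "n2 \<le> n1 + 1" "K = (3 * n2 + 1) div 2"
    | "n2 \<le> n1 + 1" "(3 * n2 + 1) div 2 < K" "n2 \<le> 5" | "n2 \<le> n1 + 1" "(3 * n2 + 1) div 2 < K" "6 \<le> n2"
    using less.prems by linarith
  then show ?case
  proof cases
    case 1
    show ?thesis
    proof (rule good_config_exists_wide[OF less.prems(1) 1 less.prems(3,4)])
      fix K' assume "3 * (n2 - 2) \<le> 2 * K'" "2 * K' \<le> n1 * (n2 - 2)"
      then show "\<exists>Us Vs. good_config n1 (n2 - 2) Us Vs \<and> length Us = K'"
        using 1 less.prems(1) by (intro less.IH) auto
    qed
  next
    case 2
    then have "(n1, n2) \<noteq> (3, 3)" using less.prems by auto
    then show ?thesis using admissible_good_config_exists[of n1 n2] less.prems 2 by blast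
  next
    case 3
    then show ?thesis using good_config_small less.prems by blast
  next
    case 4
    show ?thesis
    proof (rule good_config_exists_square[OF 4(3) less.prems(2) 4(1,2) less.prems(4)])
      fix K' assume "3 * (n2 - 2) \<le> 2 * K'" "2 * K' \<le> (n1 - 2) * (n2 - 2)"
      then show "\<exists>Us Vs. good_config (n1 - 2) (n2 - 2) Us Vs \<and> length Us = K'"
        using 4 less.prems(2) by (intro less.IH) auto
    qed
  qed
qed

lemma good_config_exists:
  assumes "3 \<le> n1" "3 \<le> n2" "3 * max n1 n2 \<le> 2 * K" "2 * K \<le> n1 * n2"
  obtains Us Vs where "good_config n1 n2 Us Vs" "length Us = K"
proof (cases "n1 \<le> n2")
  case True
  then show thesis using good_config_exists_le[of n1 n2 K] assms that by (auto simp: max_def)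
next
  case False
  then obtain Us Vs where "good_config n2 n1 Us Vs" "length Us = K"
    using good_config_exists_le[of n2 n1 K] assms by (auto simp: max_def mult.commute)
  then show thesis using good_config_swap that by fastforce
qed

theorem mainTheorem10:
  fixes n1 n2 n3 :: nat
  assumes "3 \<le> n1" and "3 \<le> n2" and "n1 \<le> n3" and "n2 \<le> n3"
    and "3 * max n1 n2 \<le> 2 * n3" and "2 * n3 \<le> n1 * n2"
  shows "metric_dim (kprod_verts (n1 + 1) (n2 + 1) (n3 + 1)) kprod_adj = 2 * n3 + 1"
proof -
  let ?V = "kprod_verts (n1 + 1) (n2 + 1) (n3 + 1)"
  obtain Us Vs where g: "good_config n1 n2 Us Vs" and len: "length Us = n3"
    using good_config_exists assms(1,2,5,6) by blast
  show ?thesis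
  proof (rule metric_dim_eqI)
    show "resolving ?V kprod_adj (config_vertices n1 n2 Us Vs)"
      using good_config_resolving[OF g] assms len by simp
    show "card (config_vertices n1 n2 Us Vs) = 2 * n3 + 1"
      using card_config_vertices g len by (simp add: good_config_def)
  next
    fix W assume "resolving ?V kprod_adj W"
    from kprod_resolving_card_ge[OF _ _ _ this] assms show "2 * n3 + 1 \<le> card W" by simp
  qed
qed

end
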